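(* Let $u=u_1u_2\cdots u_N$ be a universal cycle for $n$-permutations, possibly containing $\Diamond$ (as defined in the context), and let $n-k$ be its diamondicity. Then (i) $N=k!$. Moreover, letting $c=\gcd(n,N)$: (ii) the occurrences of $\Diamond$ in $u$ are $c$-periodic, i.e., for every $i$, $u_i=\Diamond$ if and only if $u_{i+c}=\Diamond$ (indices modulo $N$); and (iii) $\frac{n}{c}$ divides $n-k$; in particular $c\neq 1$ whenever $1\leq k\leq n-1$.
   Context: An $n$-permutation is a permutation of $\{1,\ldots,n\}$. For a word $w$ of distinct numbers, $\mathrm{red}(w)$ is obtained by replacing the $i$-th smallest letter by $i$. Let $\Diamond$ be a symbol not among the integers. A word $f=f_1\cdots f_n$ over the positive integers together with $\Diamond$, whose integer letters are pairwise distinct, covers an $n$-permutation $\pi$ if one can substitute real numbers for the occurrences of $\Diamond$ (independently) so that the resulting word has $n$ pairwise distinct entries and reduces to $\pi$; equivalently, $f_i<f_j\iff\pi_i<\pi_j$ for all positions $i,j$ holding integers. A universal cycle for $n$-permutations, possibly containing $\Diamond$, is a cyclic word $u_1\cdots u_N$ with $N\geq n$ over this alphabet, indices read modulo $N$, such that each of its $N$ cyclic factors $u_iu_{i+1}\cdots u_{i+n-1}$ ($1\leq i\leq N$) has pairwise distinct integer letters and every $n$-permutation is covered by exactly one of these factors. The number of $\Diamond$'s in a cyclic factor of length $n$ is the same for all such factors; this common number is called the diamondicity of $u$. *)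

theory Defs
  imports Complex_Main
begin

text \<open>Letters: \<open>None\<close> is the symbol Diamond, \<open>Some x\<close> (with \<open>x > 0\<close>) a positive integer.
  A cyclic word of length N is a list of length N, read cyclically.\<close>

type_synonym letter = "nat option"

definition nperms :: "nat \<Rightarrow> nat list set" where
  "nperms n = {p. distinct p \<and> set p = {1..n}}"

definition cfactor :: "letter list \<Rightarrow> nat \<Rightarrow> nat \<Rightarrow> letter list" where
  "cfactor u i n = map (\<lambda>j. u ! ((i + j) mod length u)) [0..<n]"

text \<open>f covers \<pi>: substituting reals for the diamonds (independently) yields a word
  with pairwise distinct entries whose reduction is \<pi> (red replaces the i-th smallest
  letter by i, i.e. each entry by its rank).\<close>
definition covers :: "letter list \<Rightarrow> nat list \<Rightarrow> bool" where
  "covers f \<pi> \<longleftrightarrow> length f = length \<pi> \<and>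
     (\<exists>g :: nat \<Rightarrow> real.
        let w = (\<lambda>i. case f ! i of None \<Rightarrow> g i | Some x \<Rightarrow> real x) in
        inj_on w {..<length f} \<and>
        (\<forall>i<length f. \<pi> ! i = card {j \<in> {..<length f}. w j \<le> w i}))"

definition ucycle :: "nat \<Rightarrow> letter list \<Rightarrow> bool" where
  "ucycle n u \<longleftrightarrow> length u \<ge> n \<and>
     (\<forall>x. Some x \<in> set u \<longrightarrow> x > 0) \<and>
     (\<forall>i < length u. \<forall>j1<n. \<forall>j2<n. \<forall>a.
         j1 \<noteq> j2 \<longrightarrow> cfactor u i n ! j1 = Some a \<longrightarrow> cfactor u i n ! j2 \<noteq> Some a) \<and>
     (\<forall>\<pi> \<in> nperms n. \<exists>!i. i < length u \<and> covers (cfactor u i n) \<pi>)"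

text \<open>Diamondicity: number of Diamonds in a cyclic factor of length n (it is the same
  for all factors; we take the one starting at the first position).\<close>
definition diamondicity :: "nat \<Rightarrow> letter list \<Rightarrow> nat" where
  "diamondicity n u = count_list (cfactor u 0 n) None"

end

theory Submission
  imports Defs "HOL-Number_Theory.Cong"
begin

text \<open>Covering depends only on the relative order of the entries at the integer positions of a
  factor. Inserting the maximal entry into a shorter permutation shows that a factor with \<open>k\<close>
  distinct letters covers exactly \<open>n!/k!\<close> permutations: the maximum can sit at any diamond, or
  at the position of the largest letter. Since the \<open>N\<close> cyclic factors cover the \<open>n!\<close>
  permutations exactly once, \<open>N = k!\<close> once all factors are known to contain equally many
  diamonds.

  That holds because \<open>u\<^sub>p = \<diamond>\<close> forces \<open>u\<^sub>p\<^sub>+\<^sub>n = \<diamond>\<close>. Otherwise the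
  window at \<open>p\<close> is \<open>\<diamond>w\<close> and the next one is \<open>wy\<close> with a letter \<open>y\<close>. If \<open>w\<close> has no letter,
  \<open>\<diamond>w\<close> covers every permutation, so all windows coincide with it. Otherwise pick an order that
  is compatible with \<open>w\<close> but not with \<open>wy\<close>; the window covering it is preceded by a window
  \<open>xw'\<close>, and placing the entry at \<open>x\<close> suitably yields a permutation covered by both \<open>xw'\<close> and
  \<open>\<diamond>w\<close>. By uniqueness the covering window is \<open>wy\<close>, which is impossible. So the shift by
  \<open>n\<close> maps the finite set of diamond positions injectively into itself, hence onto it; together
  with the period \<open>N\<close> this gives the period \<open>gcd n N\<close>, and a factor splits into
  \<open>n / gcd n N\<close> blocks with equally many diamonds.\<close>

subsection \<open>Ranks and covering\<close>

definition ranks :: "(nat \<Rightarrow> 'a::linorder) \<Rightarrow> nat \<Rightarrow> nat list" where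
  "ranks t n = map (\<lambda>i. card {j \<in> {..<n}. t j \<le> t i}) [0..<n]"

lemma length_ranks [simp]: "length (ranks t n) = n"
  by (simp add: ranks_def)

lemma nth_ranks: "i < n \<Longrightarrow> ranks t n ! i = card {j \<in> {..<n}. t j \<le> t i}"
  by (simp add: ranks_def)

lemma ranks_cong:
  assumes "\<And>i j. i < n \<Longrightarrow> j < n \<Longrightarrow> s j \<le> s i \<longleftrightarrow> t j \<le> t i"
  shows "ranks s n = ranks t n"
proof (rule nth_equalityI)
  fix i assume "i < length (ranks s n)"
  then have "i < n" by simp
  then have "{j \<in> {..<n}. s j \<le> s i} = {j \<in> {..<n}. t j \<le> t i}"
    using assms by auto
  then show "ranks s n ! i = ranks t n ! i"
    using \<open>i < n\<close> by (simp add: nth_ranks)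
qed simp

lemma ranks_less_iff:
  assumes "inj_on t {..<n}" "i < n" "j < n"
  shows "ranks t n ! i < ranks t n ! j \<longleftrightarrow> t i < t j"
proof
  assume less: "t i < t j"
  have "{l \<in> {..<n}. t l \<le> t i} \<subseteq> {l \<in> {..<n}. t l \<le> t j}"
    using less by auto
  moreover have "j \<in> {l \<in> {..<n}. t l \<le> t j} - {l \<in> {..<n}. t l \<le> t i}"
    using less assms(3) by simp
  ultimately have "{l \<in> {..<n}. t l \<le> t i} \<subset> {l \<in> {..<n}. t l \<le> t j}"
    by blast
  then have "card {l \<in> {..<n}. t l \<le> t i} < card {l \<in> {..<n}. t l \<le> t j}"
    by (rule psubset_card_mono[rotated]) simp
  then show "ranks t n ! i < ranks t n ! j"
    using assms(2,3) by (simp add: nth_ranks)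
next
  assume less: "ranks t n ! i < ranks t n ! j"
  show "t i < t j"
  proof (rule ccontr)
    assume "\<not> t i < t j"
    then have "{l \<in> {..<n}. t l \<le> t j} \<subseteq> {l \<in> {..<n}. t l \<le> t i}"
      by auto
    then have "card {l \<in> {..<n}. t l \<le> t j} \<le> card {l \<in> {..<n}. t l \<le> t i}"
      by (rule card_mono[rotated]) simp
    then show False
      using less assms(2,3) by (simp add: nth_ranks)
  qed
qed

lemma nperms_length: "\<pi> \<in> nperms n \<Longrightarrow> length \<pi> = n"
  unfolding nperms_def using distinct_card by fastforce

lemma finite_nperms: "finite (nperms n)"
proof (rule finite_subset)
  show "nperms n \<subseteq> {xs. set xs \<subseteq> {1..n} \<and> length xs = n}"
    using nperms_length by (auto simp: nperms_def)
qed (simp add: finite_lists_length_eq)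

lemma ranks_in_nperms:
  assumes inj: "inj_on t {..<n}"
  shows "ranks t n \<in> nperms n"
proof -
  have "ranks t n ! i \<noteq> ranks t n ! j" if "i < n" "j < n" "i \<noteq> j" for i j
  proof -
    have "t i \<noteq> t j" using inj that by (auto dest: inj_onD)
    then show ?thesis
      using ranks_less_iff[OF inj, of i j] ranks_less_iff[OF inj, of j i] that by (auto simp: neq_iff)
  qed
  then have "distinct (ranks t n)" by (simp add: distinct_conv_nth)
  moreover have "set (ranks t n) \<subseteq> {1..n}"
  proof
    fix x assume "x \<in> set (ranks t n)"
    then obtain i where i: "i < n" "x = card {j \<in> {..<n}. t j \<le> t i}"
      by (auto simp: in_set_conv_nth nth_ranks)
    have "i \<in> {j \<in> {..<n}. t j \<le> t i}" using i by simp
    then have "{j \<in> {..<n}. t j \<le> t i} \<noteq> {}" by blast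
    then have "1 \<le> x" using i by (simp add: Suc_le_eq card_gt_0_iff)
    moreover have "card {j \<in> {..<n}. t j \<le> t i} \<le> card {..<n}"
      by (rule card_mono) auto
    then have "x \<le> n" using i by simp
    ultimately show "x \<in> {1..n}" by simp
  qed
  moreover have "card (set (ranks t n)) = n"
    using \<open>distinct (ranks t n)\<close> by (simp add: distinct_card)
  ultimately show ?thesis
    unfolding nperms_def by (simp add: card_subset_eq)
qed

lemma ranks_nth_nperm:
  assumes "\<pi> \<in> nperms n"
  shows "ranks (nth \<pi>) n = \<pi>"
proof (rule nth_equalityI)
  have len: "length \<pi> = n" and dist: "distinct \<pi>" and set: "set \<pi> = {1..n}"
    using assms nperms_length by (auto simp: nperms_def)
  show "length (ranks (nth \<pi>) n) = length \<pi>" using len by simp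
  fix i assume "i < length (ranks (nth \<pi>) n)"
  then have i: "i < n" by simp
  have "bij_betw (nth \<pi>) {j \<in> {..<n}. \<pi> ! j \<le> \<pi> ! i} {1..\<pi> ! i}"
  proof (rule bij_betw_imageI)
    show "inj_on (nth \<pi>) {j \<in> {..<n}. \<pi> ! j \<le> \<pi> ! i}"
      using dist len by (auto simp: inj_on_def nth_eq_iff_index_eq)
    show "(nth \<pi>) ` {j \<in> {..<n}. \<pi> ! j \<le> \<pi> ! i} = {1..\<pi> ! i}"
    proof (intro equalityI subsetI)
      fix x assume "x \<in> (nth \<pi>) ` {j \<in> {..<n}. \<pi> ! j \<le> \<pi> ! i}"
      then obtain j where j: "j < n" "x = \<pi> ! j" "\<pi> ! j \<le> \<pi> ! i" by auto
      then have "x \<in> set \<pi>" using len by simp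
      then show "x \<in> {1..\<pi> ! i}" using j set by auto
    next
      fix x assume x: "x \<in> {1..\<pi> ! i}"
      have "\<pi> ! i \<le> n" using set len i by (metis atLeastAtMost_iff nth_mem)
      then have "x \<in> set \<pi>" using x set by auto
      then show "x \<in> (nth \<pi>) ` {j \<in> {..<n}. \<pi> ! j \<le> \<pi> ! i}"
        using x len by (auto simp: in_set_conv_nth)
    qed
  qed
  then show "ranks (nth \<pi>) n ! i = \<pi> ! i"
    using i by (simp add: nth_ranks bij_betw_same_card)
qed

lemma covers_elim:
  assumes "covers f \<pi>"
  obtains w :: "nat \<Rightarrow> real" where "inj_on w {..<length f}"
    and "\<And>j a. j < length f \<Longrightarrow> f ! j = Some a \<Longrightarrow> w j = real a"
    and "\<pi> = ranks w (length f)"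
proof -
  obtain g :: "nat \<Rightarrow> real" where len: "length f = length \<pi>"
    and inj: "inj_on (\<lambda>i. case f ! i of None \<Rightarrow> g i | Some x \<Rightarrow> real x) {..<length f}"
    and rk: "\<forall>i<length f. \<pi> ! i = card {j \<in> {..<length f}.
       (case f ! j of None \<Rightarrow> g j | Some x \<Rightarrow> real x) \<le> (case f ! i of None \<Rightarrow> g i | Some x \<Rightarrow> real x)}"
    using assms unfolding covers_def Let_def by blast
  have "\<pi> = ranks (\<lambda>i. case f ! i of None \<Rightarrow> g i | Some x \<Rightarrow> real x) (length f)"
    by (rule nth_equalityI) (use len rk in \<open>simp_all add: nth_ranks\<close>)
  then show ?thesis
    by (rule that[OF inj, rotated]) simp
qed

lemma covers_imp_nperms: "covers f \<pi> \<Longrightarrow> \<pi> \<in> nperms (length f)"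
  by (erule covers_elim) (simp add: ranks_in_nperms)

lemma covers_ranks:
  fixes w :: "nat \<Rightarrow> real"
  assumes "length f = n" "inj_on w {..<n}"
    and "\<And>j a. j < n \<Longrightarrow> f ! j = Some a \<Longrightarrow> w j = real a"
  shows "covers f (ranks w n)"
proof -
  have agree: "(case f ! i of None \<Rightarrow> w i | Some x \<Rightarrow> real x) = w i" if "i < n" for i
    using assms(3)[OF that] by (cases "f ! i") auto
  have "inj_on (\<lambda>i. case f ! i of None \<Rightarrow> w i | Some x \<Rightarrow> real x) {..<n}"
    using assms(2) by (subst inj_on_cong[where g = w]) (simp_all add: agree)
  moreover have "{j \<in> {..<n}. (case f ! j of None \<Rightarrow> w j | Some x \<Rightarrow> real x) \<le> w i} =
      {j \<in> {..<n}. w j \<le> w i}" for i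
    using agree by auto
  ultimately show ?thesis
    unfolding covers_def Let_def using assms(1) agree
    by (intro conjI exI[of _ w]) (auto simp: nth_ranks)
qed

lemma exists_real_between_avoiding:
  fixes L U S :: "real set"
  assumes "finite L" "finite U" "finite S" "\<forall>a\<in>L. \<forall>b\<in>U. a < b"
  shows "\<exists>r. (\<forall>a\<in>L. a < r) \<and> (\<forall>b\<in>U. r < b) \<and> r \<notin> S"
proof -
  define M where "M = Max (insert 0 (abs ` (L \<union> U))) + 1"
  have bound: "\<bar>x\<bar> < M" if "x \<in> L \<union> U" for x
  proof -
    have "\<bar>x\<bar> \<le> Max (insert 0 (abs ` (L \<union> U)))"
      using that assms(1,2) by (intro Max_ge) auto
    then show ?thesis by (simp add: M_def)
  qed
  have "0 \<le> Max (insert 0 (abs ` (L \<union> U)))"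
    using assms(1,2) by (intro Max_ge) auto
  then have "0 < M" by (simp add: M_def)
  then have sep: "\<forall>a\<in>insert (- M) L. \<forall>b\<in>insert M U. a < b"
    using assms(4) bound by (force simp: abs_less_iff)
  define lo where "lo = Max (insert (- M) L)"
  define hi where "hi = Min (insert M U)"
  have "\<forall>a\<in>insert (- M) L. a < hi"
    unfolding hi_def using sep assms(2) Min_gr_iff[of "insert M U"] by simp
  then have "lo < hi"
    unfolding lo_def using assms(1) Max_less_iff[of "insert (- M) L"] by simp
  then have "{lo<..<hi} - S \<noteq> {}"
    using assms(3) infinite_Ioo[of lo hi] by (metis finite_subset Diff_eq_empty_iff)
  then obtain r where r: "lo < r" "r < hi" "r \<notin> S"
    by (meson Diff_eq_empty_iff greaterThanLessThan_iff subsetI)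
  have "\<forall>a\<in>L. a < r" using r(1) assms(1) by (auto simp: lo_def)
  moreover have "\<forall>b\<in>U. r < b" using r(2) assms(2) by (auto simp: hi_def)
  ultimately show ?thesis using r(3) by blast
qed

lemma exists_order_preserving_extension:
  fixes t :: "'a \<Rightarrow> 'b::linorder" and c :: "'a \<Rightarrow> real"
  assumes "finite D" "finite E"
    and "\<forall>j\<in>D - E. \<forall>k\<in>D - E. t j < t k \<longrightarrow> c j < c k"
  shows "\<exists>v. (\<forall>j\<in>D - E. v j = c j) \<and> (\<forall>j\<in>D. \<forall>k\<in>D. t j < t k \<longrightarrow> v j < v k)"
  using assms(2,3)
proof (induction E arbitrary: c rule: finite_induct)
  case empty
  then show ?case by blast
next
  case (insert e E)
  let ?D = "D - insert e E"
  let ?L = "c ` {d \<in> ?D. t d < t e}" and ?U = "c ` {d \<in> ?D. t e < t d}"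
  have "\<forall>a\<in>?L. \<forall>b\<in>?U. a < b"
  proof (intro ballI)
    fix a b assume "a \<in> ?L" "b \<in> ?U"
    then obtain j k where "j \<in> ?D" "k \<in> ?D" "t j < t e" "t e < t k" "a = c j" "b = c k"
      by blast
    moreover from this have "t j < t k" by (blast intro: less_trans)
    ultimately show "a < b" using insert.prems by blast
  qed
  then obtain r where r: "\<forall>a\<in>?L. a < r" "\<forall>b\<in>?U. r < b"
    using exists_real_between_avoiding[of ?L ?U "{}"] assms(1) by auto
  have "t j < t k \<Longrightarrow> (c(e := r)) j < (c(e := r)) k" if "j \<in> D - E" "k \<in> D - E" for j k
  proof (cases "j = e"; cases "k = e")
    assume "j = e" "k \<noteq> e" "t j < t k"
    then show ?thesis using r(2) that by auto
  next
    assume "j \<noteq> e" "k = e" "t j < t k"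
    then show ?thesis using r(1) that by auto
  next
    assume "j \<noteq> e" "k \<noteq> e" "t j < t k"
    then show ?thesis using insert.prems that by auto
  qed auto
  then obtain v where v: "\<forall>j\<in>D - E. v j = (c(e := r)) j"
    and mono: "\<forall>j\<in>D. \<forall>k\<in>D. t j < t k \<longrightarrow> v j < v k"
    using insert.IH by blast
  have "\<forall>j\<in>?D. v j = c j" using v by auto
  with mono show ?case by blast
qed

definition compatible :: "letter list \<Rightarrow> (nat \<Rightarrow> 'a::linorder) \<Rightarrow> bool" where
  "compatible f t \<longleftrightarrow> (\<forall>j<length f. \<forall>k<length f. \<forall>a b.
      f ! j = Some a \<longrightarrow> f ! k = Some b \<longrightarrow> t j < t k \<longrightarrow> a < b)"

lemma compatibleD:
  "compatible f t \<Longrightarrow> j < length f \<Longrightarrow> k < length f \<Longrightarrow>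
    f ! j = Some a \<Longrightarrow> f ! k = Some b \<Longrightarrow> t j < t k \<Longrightarrow> a < b"
  unfolding compatible_def by blast

lemma strict_mono_ranks:
  assumes inj: "inj_on t {..<n}" and mono: "\<And>j k. j < n \<Longrightarrow> k < n \<Longrightarrow> t j < t k \<Longrightarrow> v j < v k"
  shows "inj_on v {..<n}" and "ranks v n = ranks t n"
proof -
  have same_order: "v j \<le> v k \<longleftrightarrow> t j \<le> t k" if "j < n" "k < n" for j k
  proof (cases "j = k")
    case False
    then have "t j \<noteq> t k"
      using inj_onD[OF inj, of j k] that by auto
    then have "t j < t k \<or> t k < t j"
      by (rule neq_iff[THEN iffD1])
    then show ?thesis
      using mono that by (auto simp: less_imp_le not_le[symmetric])
  qed simp
  show "inj_on v {..<n}"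
  proof (rule inj_onI)
    fix j k assume "j \<in> {..<n}" "k \<in> {..<n}" "v j = v k"
    then have "t j = t k" using same_order[of j k] same_order[of k j] by auto
    then show "j = k" using inj_onD[OF inj] \<open>j \<in> {..<n}\<close> \<open>k \<in> {..<n}\<close> by blast
  qed
  show "ranks v n = ranks t n"
    by (rule ranks_cong) (simp add: same_order)
qed

lemma covers_ranks_imp_compatible:
  assumes len: "length f = n" and inj: "inj_on t {..<n}" and cov: "covers f (ranks t n)"
  shows "compatible f t"
proof -
  obtain w where inj_w: "inj_on w {..<n}"
    and letters: "\<And>j a. j < n \<Longrightarrow> f ! j = Some a \<Longrightarrow> w j = real a"
    and eq: "ranks t n = ranks w n"
    using cov len by (auto elim: covers_elim)
  show "compatible f t"
    unfolding compatible_def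
  proof (intro allI impI)
    fix j k a b
    assume j: "j < length f" and k: "k < length f"
      and a: "f ! j = Some a" and b: "f ! k = Some b" and less: "t j < t k"
    have "ranks w n ! j < ranks w n ! k"
      using ranks_less_iff[OF inj] j k len less eq by simp
    then have "w j < w k"
      using ranks_less_iff[OF inj_w] j k len by simp
    then show "a < b"
      using letters[of j a] letters[of k b] j k a b len by simp
  qed
qed

lemma compatible_imp_covers_ranks:
  assumes len: "length f = n" and inj: "inj_on t {..<n}" and comp: "compatible f t"
  shows "covers f (ranks t n)"
proof -
  define E where "E = {j. j < n \<and> f ! j = None}"
  define c where "c j = real (the (f ! j))" for j
  have "\<forall>j\<in>{..<n} - E. \<forall>k\<in>{..<n} - E. t j < t k \<longrightarrow> c j < c k"
  proof (intro ballI impI)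
    fix j k assume j: "j \<in> {..<n} - E" and k: "k \<in> {..<n} - E" and less: "t j < t k"
    obtain a b where a: "f ! j = Some a" and b: "f ! k = Some b"
      using j k by (auto simp: E_def)
    have "a < b"
      using compatibleD[OF comp _ _ a b less] j k len by simp
    then show "c j < c k"
      using a b by (simp add: c_def)
  qed
  moreover have "finite E" by (simp add: E_def)
  ultimately obtain v where v: "\<forall>j\<in>{..<n} - E. v j = c j"
    and mono: "\<forall>j\<in>{..<n}. \<forall>k\<in>{..<n}. t j < t k \<longrightarrow> v j < v k"
    using exists_order_preserving_extension[where D = "{..<n}" and E = E and t = t and c = c] by blast
  have mono': "v j < v k" if "j < n" "k < n" "t j < t k" for j k
    using mono that by blast
  have inj_v: "inj_on v {..<n}"
    by (rule strict_mono_ranks(1)[OF inj mono'])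
  have "v j = real a" if "j < n" "f ! j = Some a" for j a
    using v that by (simp add: E_def c_def)
  with len inj_v have "covers f (ranks v n)"
    by (rule covers_ranks)
  then show ?thesis
    by (simp add: strict_mono_ranks(2)[OF inj mono'])
qed

lemma covers_ranks_iff:
  "length f = n \<Longrightarrow> inj_on t {..<n} \<Longrightarrow> covers f (ranks t n) \<longleftrightarrow> compatible f t"
  using covers_ranks_imp_compatible compatible_imp_covers_ranks by blast

lemma covers_iff_compatible:
  "covers f \<pi> \<longleftrightarrow> \<pi> \<in> nperms (length f) \<and> compatible f (nth \<pi>)"
proof (cases "\<pi> \<in> nperms (length f)")
  case True
  then have "inj_on (nth \<pi>) {..<length f}"
    using nperms_length[OF True] by (auto simp: nperms_def inj_on_def nth_eq_iff_index_eq)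
  then have "covers f (ranks (nth \<pi>) (length f)) \<longleftrightarrow> compatible f (nth \<pi>)"
    by (rule covers_ranks_iff[OF refl])
  then show ?thesis using True by (simp add: ranks_nth_nperm)
qed (use covers_imp_nperms in blast)

subsection \<open>Counting covered permutations\<close>

definition insert_at :: "nat \<Rightarrow> 'a \<Rightarrow> 'a list \<Rightarrow> 'a list" where
  "insert_at q x xs = take q xs @ x # drop q xs"

definition remove_at :: "nat \<Rightarrow> 'a list \<Rightarrow> 'a list" where
  "remove_at q xs = take q xs @ drop (Suc q) xs"

definition skip :: "nat \<Rightarrow> nat \<Rightarrow> nat" where
  "skip q j = (if j < q then j else Suc j)"

lemma length_insert_at [simp]: "q \<le> length xs \<Longrightarrow> length (insert_at q x xs) = Suc (length xs)"
  by (simp add: insert_at_def)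

lemma nth_insert_at_self [simp]: "q \<le> length xs \<Longrightarrow> insert_at q x xs ! q = x"
  by (simp add: insert_at_def nth_append)

lemma nth_insert_at_skip [simp]:
  "q \<le> length xs \<Longrightarrow> j < length xs \<Longrightarrow> insert_at q x xs ! skip q j = xs ! j"
  by (auto simp: insert_at_def skip_def nth_append)

lemma length_remove_at [simp]: "q < length xs \<Longrightarrow> length (remove_at q xs) = length xs - 1"
  by (simp add: remove_at_def)

lemma nth_remove_at:
  "q < length xs \<Longrightarrow> j < length xs - 1 \<Longrightarrow> remove_at q xs ! j = xs ! skip q j"
  by (auto simp: remove_at_def skip_def nth_append min_def)

lemma remove_insert_at [simp]: "q \<le> length xs \<Longrightarrow> remove_at q (insert_at q x xs) = xs"
  by (simp add: insert_at_def remove_at_def)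

lemma insert_remove_at: "q < length xs \<Longrightarrow> insert_at q (xs ! q) (remove_at q xs) = xs"
  by (simp add: insert_at_def remove_at_def min_def Cons_nth_drop_Suc)

lemma set_take_Un_drop: "set (take q xs) \<union> set (drop q xs) = set xs"
  by (metis append_take_drop_id set_append)

lemma set_insert_at [simp]: "set (insert_at q x xs) = insert x (set xs)"
proof -
  have "set (insert_at q x xs) = set (take q xs) \<union> insert x (set (drop q xs))"
    by (simp add: insert_at_def)
  then show ?thesis
    using set_take_Un_drop[of q xs] by blast
qed

lemma distinct_insert_at [simp]: "distinct (insert_at q x xs) \<longleftrightarrow> x \<notin> set xs \<and> distinct xs"
proof -
  have "distinct xs \<longleftrightarrow> distinct (take q xs @ drop q xs)"
    by simp
  then have "distinct xs \<longleftrightarrow>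
      distinct (take q xs) \<and> distinct (drop q xs) \<and> set (take q xs) \<inter> set (drop q xs) = {}"
    by (simp only: distinct_append)
  moreover have "distinct (insert_at q x xs) \<longleftrightarrow> distinct (take q xs) \<and> distinct (drop q xs) \<and>
      x \<notin> set (drop q xs) \<and> x \<notin> set (take q xs) \<and> set (take q xs) \<inter> set (drop q xs) = {}"
    by (auto simp: insert_at_def)
  ultimately show ?thesis
    using set_take_Un_drop[of q xs] by blast
qed

lemma count_list_insert_at:
  "count_list (insert_at q x xs) y = count_list xs y + (if x = y then 1 else 0)"
proof -
  have "count_list xs y = count_list (take q xs) y + count_list (drop q xs) y"
    by (metis append_take_drop_id count_list_append)
  then show ?thesis by (simp add: insert_at_def)
qed

lemma skip_less: "j < n \<Longrightarrow> skip q j < Suc n"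
  by (simp add: skip_def)

lemma skip_eq_iff [simp]: "skip q j = skip q k \<longleftrightarrow> j = k"
  by (simp add: skip_def)

lemma exists_skip: "q \<le> n \<Longrightarrow> j < Suc n \<Longrightarrow> j \<noteq> q \<Longrightarrow> \<exists>j'<n. j = skip q j'"
  by (rule exI[of _ "if j < q then j else j - 1"]) (auto simp: skip_def)

lemma inj_on_insert_at_Suc:
  "inj_on (\<lambda>(q, \<tau>). insert_at q (Suc n) \<tau>) ({..n} \<times> nperms n)"
proof (rule inj_onI, clarsimp)
  fix q q' \<tau> \<tau>'
  assume q: "q \<le> n" "q' \<le> n" and \<tau>: "\<tau> \<in> nperms n" "\<tau>' \<in> nperms n"
    and eq: "insert_at q (Suc n) \<tau> = insert_at q' (Suc n) \<tau>'"
  have len: "length \<tau> = n" "length \<tau>' = n" using \<tau> by (simp_all add: nperms_length)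
  have "distinct (insert_at q (Suc n) \<tau>)" using \<tau>(1) by (auto simp: nperms_def)
  moreover have "insert_at q (Suc n) \<tau> ! q' = Suc n"
    using eq q len by simp
  then have "insert_at q (Suc n) \<tau> ! q = insert_at q (Suc n) \<tau> ! q'"
    using q len by simp
  moreover have "q < length (insert_at q (Suc n) \<tau>)" "q' < length (insert_at q (Suc n) \<tau>)"
    using q len by simp_all
  ultimately have "q = q'"
    using nth_eq_iff_index_eq by blast
  then show "q = q' \<and> \<tau> = \<tau>'"
    using eq q len by (metis remove_insert_at)
qed

lemma insert_at_Suc_image:
  "(\<lambda>(q, \<tau>). insert_at q (Suc n) \<tau>) ` ({..n} \<times> nperms n) = nperms (Suc n)"
proof (intro equalityI subsetI)
  fix \<pi> assume "\<pi> \<in> (\<lambda>(q, \<tau>). insert_at q (Suc n) \<tau>) ` ({..n} \<times> nperms n)"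
  then obtain q \<tau> where "q \<le> n" "\<tau> \<in> nperms n" "\<pi> = insert_at q (Suc n) \<tau>"
    by auto
  then show "\<pi> \<in> nperms (Suc n)"
    by (auto simp: nperms_def)
next
  fix \<pi> assume \<pi>: "\<pi> \<in> nperms (Suc n)"
  then have len: "length \<pi> = Suc n" by (rule nperms_length)
  have "Suc n \<in> set \<pi>" using \<pi> by (simp add: nperms_def)
  then obtain q where q: "q < Suc n" "\<pi> ! q = Suc n"
    using len by (auto simp: in_set_conv_nth)
  define \<tau> where "\<tau> = remove_at q \<pi>"
  have \<pi>_eq: "\<pi> = insert_at q (Suc n) \<tau>"
    using insert_remove_at[of q \<pi>] q len by (simp add: \<tau>_def)
  have "Suc n \<notin> set \<tau>" "distinct \<tau>" "insert (Suc n) (set \<tau>) = {1..Suc n}"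
    using \<pi> unfolding \<pi>_eq by (simp_all add: nperms_def)
  then have "set \<tau> = {1..Suc n} - {Suc n}"
    by blast
  also have "\<dots> = {1..n}"
    by auto
  finally have "\<tau> \<in> nperms n"
    using \<open>distinct \<tau>\<close> by (simp add: nperms_def)
  then show "\<pi> \<in> (\<lambda>(q, \<tau>). insert_at q (Suc n) \<tau>) ` ({..n} \<times> nperms n)"
    using \<pi>_eq q by force
qed

definition distinct_letters :: "letter list \<Rightarrow> bool" where
  "distinct_letters f \<longleftrightarrow>
     (\<forall>j<length f. \<forall>k<length f. \<forall>a. j \<noteq> k \<longrightarrow> f ! j = Some a \<longrightarrow> f ! k \<noteq> Some a)"

definition admits_max :: "letter list \<Rightarrow> nat \<Rightarrow> bool" where
  "admits_max f q \<longleftrightarrow> (\<forall>k<length f. \<forall>a b. k \<noteq> q \<longrightarrow> f ! q = Some a \<longrightarrow> f ! k = Some b \<longrightarrow> b < a)"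

lemma nth_insert_at_below_max:
  assumes "\<tau> \<in> nperms n" "q \<le> n" "k < Suc n" "k \<noteq> q"
  shows "insert_at q (Suc n) \<tau> ! k < Suc n"
proof -
  obtain k' where k': "k' < n" "k = skip q k'"
    using exists_skip assms(2-4) by blast
  have "length \<tau> = n" using assms(1) by (rule nperms_length)
  then have "\<tau> ! k' \<in> {1..n}"
    using assms(1) k'(1) nth_mem[of k' \<tau>] by (simp add: nperms_def)
  then show ?thesis
    using k' assms(2) \<open>length \<tau> = n\<close> by simp
qed

lemma compatible_insert_maxD:
  assumes f: "length f = Suc n" and q: "q \<le> n" and \<tau>: "\<tau> \<in> nperms n"
    and comp: "compatible f (nth (insert_at q (Suc n) \<tau>))"
  shows "admits_max f q" and "compatible (remove_at q f) (nth \<tau>)"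
proof -
  let ?\<pi> = "insert_at q (Suc n) \<tau>"
  have len: "length \<tau> = n" using \<tau> by (rule nperms_length)
  show "admits_max f q"
    unfolding admits_max_def
  proof (intro allI impI)
    fix k a b assume k: "k < length f" "k \<noteq> q" and a: "f ! q = Some a" and b: "f ! k = Some b"
    then have "?\<pi> ! k < ?\<pi> ! q"
      using nth_insert_at_below_max[OF \<tau> q] f q len by simp
    then show "b < a"
      using compatibleD[OF comp k(1) _ b a] q f by simp
  qed
  show "compatible (remove_at q f) (nth \<tau>)"
    unfolding compatible_def
  proof (intro allI impI)
    fix j k a b
    assume "j < length (remove_at q f)" "k < length (remove_at q f)"
      and "remove_at q f ! j = Some a" "remove_at q f ! k = Some b" "\<tau> ! j < \<tau> ! k"
    then have "skip q j < length f" "skip q k < length f"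
      "f ! skip q j = Some a" "f ! skip q k = Some b" "?\<pi> ! skip q j < ?\<pi> ! skip q k"
      using f q len skip_less[of _ n q] by (simp_all add: nth_remove_at)
    then show "a < b"
      using compatibleD[OF comp] by blast
  qed
qed

lemma compatible_insert_maxI:
  assumes f: "length f = Suc n" and q: "q \<le> n" and \<tau>: "\<tau> \<in> nperms n"
    and adm: "admits_max f q" and comp: "compatible (remove_at q f) (nth \<tau>)"
  shows "compatible f (nth (insert_at q (Suc n) \<tau>))"
  unfolding compatible_def
proof (intro allI impI)
  let ?\<pi> = "insert_at q (Suc n) \<tau>"
  have len: "length \<tau> = n" using \<tau> by (rule nperms_length)
  fix j k a b
  assume j: "j < length f" and k: "k < length f" and a: "f ! j = Some a" and b: "f ! k = Some b"
    and less: "?\<pi> ! j < ?\<pi> ! k"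
  have "j \<noteq> q"
    using less nth_insert_at_below_max[OF \<tau> q, of k] k f q len by (cases "k = q") auto
  show "a < b"
  proof (cases "k = q")
    case True
    then show ?thesis
      using adm j \<open>j \<noteq> q\<close> a b unfolding admits_max_def by blast
  next
    case False
    obtain j' k' where "j' < n" "j = skip q j'" "k' < n" "k = skip q k'"
      using exists_skip[OF q, of j] exists_skip[OF q, of k] f j k \<open>j \<noteq> q\<close> False by auto
    then show ?thesis
      using compatibleD[OF comp, of j' k' a b] f q len a b less by (simp add: nth_remove_at)
  qed
qed

lemma compatible_insert_max:
  "length f = Suc n \<Longrightarrow> q \<le> n \<Longrightarrow> \<tau> \<in> nperms n \<Longrightarrow>
    compatible f (nth (insert_at q (Suc n) \<tau>)) \<longleftrightarrow> admits_max f q \<and> compatible (remove_at q f) (nth \<tau>)"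
  using compatible_insert_maxD compatible_insert_maxI by blast

lemma distinct_letters_remove_at:
  assumes "distinct_letters f" "q < length f"
  shows "distinct_letters (remove_at q f)"
  unfolding distinct_letters_def
proof (intro allI impI)
  fix j k a
  assume "j < length (remove_at q f)" "k < length (remove_at q f)" "j \<noteq> k"
    and "remove_at q f ! j = Some a"
  moreover have "skip q j < length f" "skip q k < length f"
    using calculation assms(2) skip_less[of j "length f - 1" q] skip_less[of k "length f - 1" q]
    by simp_all
  ultimately show "remove_at q f ! k \<noteq> Some a"
    using assms unfolding distinct_letters_def by (simp add: nth_remove_at)
qed

lemma count_list_remove_at:
  "q < length xs \<Longrightarrow> count_list xs y = count_list (remove_at q xs) y + (if xs ! q = y then 1 else 0)"
  by (metis insert_remove_at count_list_insert_at)

lemma count_list_eq_card: "count_list xs y = card {q. q < length xs \<and> xs ! q = y}"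
  by (simp add: count_list_eq_length_filter length_filter_conv_card eq_commute)

lemma finite_covers: "finite {\<pi>. covers f \<pi>}"
  using finite_nperms covers_imp_nperms by (metis finite_subset mem_Collect_eq subsetI)

lemma covers_Suc_eq_image:
  assumes f: "length f = Suc n"
  shows "{\<pi>. covers f \<pi>} = (\<lambda>(q, \<tau>). insert_at q (Suc n) \<tau>) `
    (SIGMA q:{q. q \<le> n \<and> admits_max f q}. {\<tau>. covers (remove_at q f) \<tau>})"
proof (intro equalityI subsetI)
  have covers_rem: "covers (remove_at q f) \<tau> \<longleftrightarrow> \<tau> \<in> nperms n \<and> compatible (remove_at q f) (nth \<tau>)"
    if "q \<le> n" for q \<tau>
    using covers_iff_compatible[of "remove_at q f" \<tau>] f that by simp
  {
    fix \<pi> assume "\<pi> \<in> {\<pi>. covers f \<pi>}"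
    then have "\<pi> \<in> (\<lambda>(q, \<tau>). insert_at q (Suc n) \<tau>) ` ({..n} \<times> nperms n)" "compatible f (nth \<pi>)"
      using f insert_at_Suc_image[of n] by (simp_all add: covers_iff_compatible)
    then show "\<pi> \<in> (\<lambda>(q, \<tau>). insert_at q (Suc n) \<tau>) `
        (SIGMA q:{q. q \<le> n \<and> admits_max f q}. {\<tau>. covers (remove_at q f) \<tau>})"
      using compatible_insert_max[OF f] covers_rem by (auto simp: image_iff)
  next
    fix \<pi> assume "\<pi> \<in> (\<lambda>(q, \<tau>). insert_at q (Suc n) \<tau>) `
        (SIGMA q:{q. q \<le> n \<and> admits_max f q}. {\<tau>. covers (remove_at q f) \<tau>})"
    then obtain q \<tau> where q: "q \<le> n" "admits_max f q" and \<tau>: "\<tau> \<in> nperms n"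
      "compatible (remove_at q f) (nth \<tau>)" and \<pi>: "\<pi> = insert_at q (Suc n) \<tau>"
      using covers_rem by auto
    then have "\<pi> \<in> nperms (Suc n)" "compatible f (nth \<pi>)"
      using insert_at_Suc_image[of n] compatible_insert_max[OF f] by auto
    then show "\<pi> \<in> {\<pi>. covers f \<pi>}"
      using f by (simp add: covers_iff_compatible)
  }
qed

lemma card_covers_Suc:
  assumes f: "length f = Suc n"
  shows "card {\<pi>. covers f \<pi>} =
    (\<Sum>q | q \<le> n \<and> admits_max f q. card {\<tau>. covers (remove_at q f) \<tau>})"
proof -
  have "inj_on (\<lambda>(q, \<tau>). insert_at q (Suc n) \<tau>)
      (SIGMA q:{q. q \<le> n \<and> admits_max f q}. {\<tau>. covers (remove_at q f) \<tau>})"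
    using inj_on_insert_at_Suc by (rule inj_on_subset) (auto dest: covers_imp_nperms simp: f)
  then show ?thesis
    by (simp add: covers_Suc_eq_image[OF f] card_image finite_covers)
qed

lemma admits_max_unique:
  "admits_max f q \<Longrightarrow> admits_max f q' \<Longrightarrow> q < length f \<Longrightarrow> q' < length f \<Longrightarrow>
    f ! q \<noteq> None \<Longrightarrow> f ! q' \<noteq> None \<Longrightarrow> q = q'"
  unfolding admits_max_def by (metis less_asym' option.exhaust)

lemma admits_max_Max:
  assumes dist: "distinct_letters f" and q: "q < length f" "f ! q = Some (Max {a. Some a \<in> set f})"
  shows "admits_max f q"
  unfolding admits_max_def
proof (intro allI impI)
  fix k a b assume k: "k < length f" "k \<noteq> q" and "f ! q = Some a" "f ! k = Some b"
  then have "a = Max {a. Some a \<in> set f}" "Some b \<in> set f" "b \<noteq> a"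
    using q dist[unfolded distinct_letters_def, rule_format, of k q b] by (auto simp: in_set_conv_nth)
  moreover have "finite {a. Some a \<in> set f}"
    by (rule finite_subset[of _ "the ` set f"]) force+
  ultimately have "b \<le> a"
    using Max_ge[of "{a. Some a \<in> set f}" b] by blast
  with \<open>b \<noteq> a\<close> show "b < a" by simp
qed

lemma card_letters_admitting_max:
  assumes dist: "distinct_letters f" and letter: "\<exists>q<length f. f ! q \<noteq> None"
  shows "card {q. q < length f \<and> f ! q \<noteq> None \<and> admits_max f q} = 1"
proof -
  let ?L = "{a. Some a \<in> set f}"
  have "finite ?L"
    by (rule finite_subset[of _ "the ` set f"]) force+
  moreover have "?L \<noteq> {}"
    using letter by (auto simp: in_set_conv_nth)
  ultimately have "Max ?L \<in> ?L" by (rule Max_in)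
  then obtain q0 where q0: "q0 < length f" "f ! q0 = Some (Max ?L)"
    by (auto simp: in_set_conv_nth)
  then have "{q. q < length f \<and> f ! q \<noteq> None \<and> admits_max f q} = {q0}"
    using admits_max_Max[OF dist] admits_max_unique by blast
  then show ?thesis by simp
qed

lemma card_covers_remove_at:
  assumes f: "length f = Suc n" and q: "q \<le> n"
    and IH: "card {\<tau>. covers (remove_at q f) \<tau>} * fact (n - count_list (remove_at q f) None) = fact n"
  shows "card {\<tau>. covers (remove_at q f) \<tau>} * fact (Suc n - count_list f None) =
    (if f ! q = None then 1 else Suc n - count_list f None) * fact n"
proof -
  have count: "count_list f None = count_list (remove_at q f) None + (if f ! q = None then 1 else 0)"
    using count_list_remove_at[of q f None] f q by simp
  moreover have "count_list (remove_at q f) None \<le> n"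
    using count_le_length[of "remove_at q f" None] f q by simp
  ultimately have "Suc n - count_list f None = (if f ! q = None
      then n - count_list (remove_at q f) None else Suc (n - count_list (remove_at q f) None))"
    by auto
  then show ?thesis
    using IH by (auto simp: algebra_simps)
qed

lemma card_covers_step:
  assumes f: "length f = Suc n" and dist: "distinct_letters f"
    and IH: "\<And>g. length g = n \<Longrightarrow> distinct_letters g \<Longrightarrow>
      card {\<pi>. covers g \<pi>} * fact (n - count_list g None) = fact n"
  shows "card {\<pi>. covers f \<pi>} * fact (Suc n - count_list f None) = fact (Suc n)"
proof -
  define k where "k = Suc n - count_list f None"
  define c where "c q = card {\<tau>. covers (remove_at q f) \<tau>}" for q
  define Q0 where "Q0 = {q. q \<le> n \<and> f ! q = None}"
  define Q1 where "Q1 = {q. q \<le> n \<and> f ! q \<noteq> None \<and> admits_max f q}"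
  have summand: "c q * fact k = (if f ! q = None then 1 else k) * fact n" if "q \<le> n" for q
    using card_covers_remove_at[OF f that] IH[of "remove_at q f"] distinct_letters_remove_at[OF dist]
      f that by (simp add: c_def k_def)
  have card_Q0: "card Q0 = count_list f None"
    using f by (simp add: count_list_eq_card Q0_def less_Suc_eq_le)
  have card_Q1: "card Q1 * k = k"
  proof (cases "\<exists>q<length f. f ! q \<noteq> None")
    case True
    then show ?thesis
      using card_letters_admitting_max[OF dist] f by (simp add: Q1_def less_Suc_eq_le)
  next
    case False
    then have "{q. q < length f \<and> f ! q = None} = {..<Suc n}"
      using f by auto
    then show ?thesis by (simp add: k_def count_list_eq_card)
  qed
  have "{q. q \<le> n \<and> admits_max f q} = Q0 \<union> Q1" "Q0 \<inter> Q1 = {}" "finite Q0" "finite Q1"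
    by (auto simp: Q0_def Q1_def admits_max_def)
  then have "card {\<pi>. covers f \<pi>} * fact k = (\<Sum>q\<in>Q0. c q * fact k) + (\<Sum>q\<in>Q1. c q * fact k)"
    using card_covers_Suc[OF f] by (simp add: c_def sum.union_disjoint sum_distrib_right distrib_right)
  also have "(\<Sum>q\<in>Q0. c q * fact k) = (\<Sum>q\<in>Q0. fact n)"
    by (rule sum.cong) (simp_all add: summand Q0_def)
  also have "(\<Sum>q\<in>Q1. c q * fact k) = (\<Sum>q\<in>Q1. k * fact n)"
    by (rule sum.cong) (auto simp: summand Q1_def)
  also have "(\<Sum>q\<in>Q0. fact n) + (\<Sum>q\<in>Q1. k * fact n) = count_list f None * fact n + card Q1 * k * fact n"
    using card_Q0 by simp
  also have "\<dots> = (count_list f None + k) * fact n"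
    using card_Q1 by (simp add: distrib_right)
  also have "count_list f None + k = Suc n"
    using count_le_length[of f None] f by (simp add: k_def)
  finally show ?thesis by (simp add: k_def)
qed

theorem card_covers:
  "distinct_letters f \<Longrightarrow>
    card {\<pi>. covers f \<pi>} * fact (length f - count_list f None) = fact (length f)"
proof (induction "length f" arbitrary: f)
  case 0
  then have "{\<pi>. covers f \<pi>} = {[]}"
    by (auto simp: covers_iff_compatible nperms_def compatible_def)
  then show ?case using 0 by simp
next
  case (Suc n)
  have "card {\<pi>. covers g \<pi>} * fact (n - count_list g None) = fact n"
    if "length g = n" "distinct_letters g" for g
    using Suc.hyps(1)[of g] that by simp
  then show ?case
    using card_covers_step[of f n] Suc.hyps(2) Suc.prems by simp
qed

subsection \<open>Windows of a universal cycle\<close>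

definition letter_values :: "letter list \<Rightarrow> nat \<Rightarrow> real" where
  "letter_values f j = (case f ! j of Some a \<Rightarrow> real a | None \<Rightarrow> - real j - 1)"

lemma inj_on_letter_values:
  assumes "distinct_letters f"
  shows "inj_on (letter_values f) {..<length f}"
proof (rule inj_onI)
  fix j k assume j: "j \<in> {..<length f}" and k: "k \<in> {..<length f}"
    and eq: "letter_values f j = letter_values f k"
  show "j = k"
  proof (cases "f ! j")
    case None
    then show ?thesis
      using eq by (cases "f ! k") (simp_all add: letter_values_def)
  next
    case (Some a)
    then obtain b where b: "f ! k = Some b"
      using eq by (cases "f ! k") (simp_all add: letter_values_def)
    then have "a = b"
      using eq Some by (simp add: letter_values_def)
    then show ?thesis
      using assms[unfolded distinct_letters_def, rule_format, of j k a] j k Some b by auto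
  qed
qed

lemma compatible_letter_values: "compatible f (letter_values f)"
  by (simp add: compatible_def letter_values_def)

lemma exists_covers: "distinct_letters f \<Longrightarrow> \<exists>\<pi>. covers f \<pi>"
  using covers_ranks_iff[OF refl inj_on_letter_values] compatible_letter_values by blast

lemma compatible_None_Cons:
  assumes "compatible w v"
  shows "compatible (None # w) (case_nat r v)"
  unfolding compatible_def
proof (intro allI impI)
  fix j k a b
  assume "j < length (None # w)" "k < length (None # w)"
    and "(None # w) ! j = Some a" "(None # w) ! k = Some b" "case_nat r v j < case_nat r v k"
  moreover obtain j' k' where "j = Suc j'" "k = Suc k'"
    using calculation(3,4) by (cases j; cases k) simp_all
  ultimately show "a < b"
    using compatibleD[OF assms, of j' k' a b] by simp
qed

lemma distinct_letters_Cons: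
  assumes "distinct_letters (Some a # w)" "k < length w"
  shows "w ! k \<noteq> Some a"
  using assms(1)[unfolded distinct_letters_def, rule_format, of 0 "Suc k" a] assms(2) by simp

lemma compatible_Cons_case_nat:
  assumes comp: "compatible w v" and dist: "distinct_letters (x # w)"
    and below: "\<And>j b d. j < length w \<Longrightarrow> w ! j = Some b \<Longrightarrow> x = Some d \<Longrightarrow> b < d \<Longrightarrow> v j < r"
    and above: "\<And>j b d. j < length w \<Longrightarrow> w ! j = Some b \<Longrightarrow> x = Some d \<Longrightarrow> d < b \<Longrightarrow> r < v j"
  shows "compatible (x # w) (case_nat r v)"
  unfolding compatible_def
proof (intro allI impI)
  fix j k a b
  assume j: "j < length (x # w)" and k: "k < length (x # w)"
    and a: "(x # w) ! j = Some a" and b: "(x # w) ! k = Some b"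
    and less: "case_nat r v j < case_nat r v k"
  show "a < b"
  proof (cases j; cases k)
    fix k' assume "j = 0" "k = Suc k'"
    then have "k' < length w" "w ! k' = Some b" "x = Some a" "r < v k'"
      using k b a less by simp_all
    then show "a < b"
      using distinct_letters_Cons[of a w k'] dist below[of k' b a] by (auto simp: neq_iff)
  next
    fix j' assume "j = Suc j'" "k = 0"
    then have "j' < length w" "w ! j' = Some a" "x = Some b" "v j' < r"
      using j a b less by simp_all
    then show "a < b"
      using distinct_letters_Cons[of b w j'] dist above[of j' a b] by (auto simp: neq_iff)
  next
    fix j' k' assume "j = Suc j'" "k = Suc k'"
    then show "a < b"
      using compatibleD[OF comp, of j' k' a b] j k a b less by simp
  qed (use less in simp)
qed

lemma exists_compatible_Cons:
  fixes v :: "nat \<Rightarrow> real"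
  assumes comp: "compatible w v" and inj: "inj_on v {..<length w}"
    and dist: "distinct_letters (x # w)"
  shows "\<exists>r. r \<notin> v ` {..<length w} \<and> compatible (x # w) (case_nat r v)"
proof -
  define L where "L = v ` {j. j < length w \<and> (\<exists>b d. w ! j = Some b \<and> x = Some d \<and> b < d)}"
  define U where "U = v ` {j. j < length w \<and> (\<exists>b d. w ! j = Some b \<and> x = Some d \<and> d < b)}"
  have "\<forall>l\<in>L. \<forall>h\<in>U. l < h"
  proof (intro ballI)
    fix l h assume "l \<in> L" "h \<in> U"
    then obtain j k b b' d where jk: "j < length w" "k < length w" "w ! j = Some b" "w ! k = Some b'"
      "b < d" "d < b'" "l = v j" "h = v k"
      unfolding L_def U_def by auto
    have "\<not> v k < v j"
      using compatibleD[OF comp jk(2,1,4,3)] jk(5,6) by auto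
    moreover have "v j \<noteq> v k"
      using inj_onD[OF inj, of j k] jk by auto
    ultimately show "l < h" using jk by simp
  qed
  then obtain r where r: "\<forall>l\<in>L. l < r" "\<forall>h\<in>U. r < h" "r \<notin> v ` {..<length w}"
    using exists_real_between_avoiding[of L U "v ` {..<length w}"] by (auto simp: L_def U_def)
  have "compatible (x # w) (case_nat r v)"
    by (rule compatible_Cons_case_nat[OF comp dist]) (use r(1,2) in \<open>auto simp: L_def U_def\<close>)
  with r(3) show ?thesis by blast
qed

lemma exists_incompatible_last:
  assumes dist: "distinct_letters f" and len: "length f = Suc m" and y: "f ! m = Some y"
    and j: "j < m" "f ! j = Some a"
  shows "\<exists>v :: nat \<Rightarrow> real. inj_on v {..<Suc m} \<and> compatible (take m f) v \<and> \<not> compatible f v"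
proof -
  let ?t = "letter_values f"
  have "a \<noteq> y"
    using dist[unfolded distinct_letters_def, rule_format, of j m a] j len y by auto
  have "\<exists>r. (y < a \<longrightarrow> real a < r) \<and> (a < y \<longrightarrow> r < real a) \<and> r \<notin> ?t ` {..<m}"
  proof (cases "a < y")
    case True
    then show ?thesis using exists_real_between_avoiding[of "{}" "{real a}" "?t ` {..<m}"] by auto
  next
    case False
    then show ?thesis using exists_real_between_avoiding[of "{real a}" "{}" "?t ` {..<m}"] by auto
  qed
  then obtain r where r: "y < a \<Longrightarrow> real a < r" "a < y \<Longrightarrow> r < real a" "r \<notin> ?t ` {..<m}"
    by blast
  define v where "v = ?t(m := r)"
  have "inj_on ?t {..<m}"
    using inj_on_letter_values[OF dist] by (rule inj_on_subset) (auto simp: len)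
  then have "inj_on v {..<Suc m}"
    using r(3) by (simp add: v_def lessThan_Suc inj_on_fun_updI)
  moreover have "compatible (take m f) v"
    unfolding compatible_def
  proof (intro allI impI)
    fix i k b c
    assume "i < length (take m f)" "k < length (take m f)"
      and "take m f ! i = Some b" "take m f ! k = Some c" "v i < v k"
    then show "b < c"
      using compatibleD[OF compatible_letter_values, of i f k b c] len by (simp add: v_def)
  qed
  moreover have "\<not> compatible f v"
  proof
    assume comp: "compatible f v"
    have "v j = real a" "v m = r"
      using j by (simp_all add: v_def letter_values_def)
    then show False
      using r(1,2) \<open>a \<noteq> y\<close> compatibleD[OF comp, of m j y a] compatibleD[OF comp, of j m a y] j y len
      by (cases "a < y") simp_all
  qed
  ultimately show ?thesis by blast
qed

lemma length_cfactor [simp]: "length (cfactor u i n) = n"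
  by (simp add: cfactor_def)

lemma nth_cfactor: "j < n \<Longrightarrow> cfactor u i n ! j = u ! ((i + j) mod length u)"
  by (simp add: cfactor_def)

lemma cfactor_mod: "cfactor u (i mod length u) n = cfactor u i n"
  by (simp add: cfactor_def mod_add_left_eq)

lemma cfactor_Suc:
  "cfactor u i (Suc m) = u ! (i mod length u) # take m (cfactor u (Suc i) (Suc m))"
  by (rule nth_equalityI) (auto simp: nth_cfactor nth_Cons split: nat.split)

lemma upt_in_nperms: "[1..<Suc n] \<in> nperms n"
proof -
  have "set [1..<Suc n] = {1..<Suc n}" by (rule set_upt)
  also have "\<dots> = {1..n}" by (rule atLeastLessThanSuc_atLeastAtMost)
  finally show ?thesis unfolding nperms_def by simp
qed

lemma ucycle_length_pos: "ucycle n u \<Longrightarrow> 0 < length u"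
proof -
  assume "ucycle n u"
  moreover note upt_in_nperms[of n]
  ultimately show ?thesis
    unfolding ucycle_def by (metis gr_zeroI not_less0)
qed

lemma ucycle_distinct_letters:
  assumes "ucycle n u"
  shows "distinct_letters (cfactor u i n)"
proof -
  have "i mod length u < length u"
    using ucycle_length_pos[OF assms] by simp
  then have "distinct_letters (cfactor u (i mod length u) n)"
    using assms unfolding ucycle_def distinct_letters_def by simp
  then show ?thesis by (simp add: cfactor_mod)
qed

lemma ucycle_covers_unique:
  assumes "ucycle n u" "covers (cfactor u i n) \<pi>" "covers (cfactor u j n) \<pi>"
  shows "i mod length u = j mod length u"
proof -
  have "\<pi> \<in> nperms n"
    using covers_imp_nperms[OF assms(2)] by simp
  then have "\<exists>!i. i < length u \<and> covers (cfactor u i n) \<pi>"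
    using assms(1) by (simp add: ucycle_def)
  moreover have "i mod length u < length u" "j mod length u < length u"
    using ucycle_length_pos[OF assms(1)] by simp_all
  ultimately show ?thesis
    using assms(2,3) by (metis cfactor_mod)
qed

lemma ucycle_covers_exists:
  "ucycle n u \<Longrightarrow> \<pi> \<in> nperms n \<Longrightarrow> \<exists>i<length u. covers (cfactor u i n) \<pi>"
  unfolding ucycle_def by blast

lemma compatible_take: "compatible w t \<Longrightarrow> compatible (take m w) t"
  unfolding compatible_def by auto

lemma compatible_replicate_None: "compatible (replicate n None) t"
  by (simp add: compatible_def)

lemma inj_on_case_nat:
  assumes "inj_on v {..<m}" "r \<notin> v ` {..<m}"
  shows "inj_on (case_nat r v) {..<Suc m}"
proof (rule inj_onI)
  fix j k assume j: "j \<in> {..<Suc m}" and k: "k \<in> {..<Suc m}" and eq: "case_nat r v j = case_nat r v k"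
  show "j = k"
  proof (cases j; cases k)
    fix j' k' assume "j = Suc j'" "k = Suc k'"
    then show "j = k" using eq j k inj_onD[OF assms(1), of j' k'] by simp
  qed (use eq j k assms(2) in auto)
qed

lemma cfactor_pred:
  assumes "0 < length u"
  shows "cfactor u (i + length u - 1) (Suc m) =
    u ! ((i + length u - 1) mod length u) # take m (cfactor u i (Suc m))"
proof -
  have "cfactor u (Suc (i + length u - 1)) (Suc m) = cfactor u i (Suc m)"
    using assms cfactor_mod[of u "i + length u"] cfactor_mod[of u i] by simp
  then show ?thesis
    using cfactor_Suc[of u "i + length u - 1" m] by simp
qed

lemma ucycle_all_diamonds:
  assumes uc: "ucycle n u" and p: "cfactor u p n = replicate n None"
  shows "cfactor u i n = replicate n None"
proof -
  obtain \<sigma> where \<sigma>: "covers (cfactor u i n) \<sigma>"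
    using exists_covers ucycle_distinct_letters[OF uc] by blast
  then have "covers (cfactor u p n) \<sigma>"
    using covers_imp_nperms[OF \<sigma>] p by (simp add: covers_iff_compatible compatible_replicate_None)
  then have "p mod length u = i mod length u"
    using ucycle_covers_unique[OF uc _ \<sigma>] by simp
  then show ?thesis
    using p cfactor_mod[of u i n] cfactor_mod[of u p n] by simp
qed

lemma ucycle_window_after_diamond:
  fixes v :: "nat \<Rightarrow> real"
  assumes uc: "ucycle (Suc m) u" and diamond: "u ! (p mod length u) = None"
    and inj: "inj_on v {..<Suc m}"
    and prefix: "compatible (take m (cfactor u (Suc p) (Suc m))) v"
    and comp: "compatible (cfactor u i (Suc m)) v"
  shows "i mod length u = Suc p mod length u"
proof -
  define N where "N = length u"
  let ?W = "\<lambda>i. cfactor u i (Suc m)"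
  have N: "0 < N" using ucycle_length_pos[OF uc] by (simp add: N_def)
  obtain x where G: "?W (i + N - 1) = x # take m (?W i)"
    using cfactor_pred[of u i m] N by (simp add: N_def)
  have inj_m: "inj_on v {..<m}"
    using inj by (rule inj_on_subset) auto
  moreover have "distinct_letters (x # take m (?W i))"
    using ucycle_distinct_letters[OF uc, of "i + N - 1"] G by simp
  ultimately have "\<exists>r. r \<notin> v ` {..<length (take m (?W i))} \<and>
      compatible (x # take m (?W i)) (case_nat r v)"
    using compatible_take[OF comp] by (intro exists_compatible_Cons) simp_all
  then obtain r where r: "r \<notin> v ` {..<m}" and comp_G: "compatible (?W (i + N - 1)) (case_nat r v)"
    using G by auto
  have inj_r: "inj_on (case_nat r v) {..<Suc m}"
    by (rule inj_on_case_nat[OF inj_m r])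
  have cov_G: "covers (?W (i + N - 1)) (ranks (case_nat r v) (Suc m))"
    using comp_G by (simp add: covers_ranks_iff[OF length_cfactor inj_r])
  have "compatible (?W p) (case_nat r v)"
    using compatible_None_Cons[OF prefix] cfactor_Suc[of u p m] diamond by simp
  then have cov_p: "covers (?W p) (ranks (case_nat r v) (Suc m))"
    by (simp add: covers_ranks_iff[OF length_cfactor inj_r])
  have "(i + N - 1) mod N = p mod N"
    using ucycle_covers_unique[OF uc cov_G cov_p] by (simp add: N_def)
  then have "Suc ((i + N - 1) mod N) mod N = Suc (p mod N) mod N"
    by simp
  then show ?thesis
    using N by (simp add: mod_Suc_eq N_def)
qed

lemma ucycle_letter_before_last:
  assumes uc: "ucycle (Suc m) u" and diamond: "u ! (p mod length u) = None"
    and last: "cfactor u (Suc p) (Suc m) ! m = Some y"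
  shows "\<exists>j<m. cfactor u (Suc p) (Suc m) ! j \<noteq> None"
proof (rule ccontr)
  let ?F = "cfactor u (Suc p) (Suc m)"
  assume "\<not> (\<exists>j<m. ?F ! j \<noteq> None)"
  then have "take m ?F = replicate m None"
    by (intro nth_equalityI) simp_all
  then have "cfactor u p (Suc m) = replicate (Suc m) None"
    using cfactor_Suc[of u p m] diamond by simp
  then have "?F = replicate (Suc m) None"
    by (rule ucycle_all_diamonds[OF uc])
  then show False
    using last by (simp add: nth_replicate del: replicate_Suc)
qed

lemma ucycle_diamond_shift:
  assumes uc: "ucycle n u" and diamond: "u ! (p mod length u) = None"
  shows "u ! ((p + n) mod length u) = None"
proof (cases n)
  case (Suc m)
  let ?W = "\<lambda>i. cfactor u i n"
  define F where "F = ?W (Suc p)"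
  have len_F: "length F = Suc m" by (simp add: F_def Suc)
  show ?thesis
  proof (rule ccontr)
    assume "u ! ((p + n) mod length u) \<noteq> None"
    then obtain y where F_last: "F ! m = Some y"
      by (auto simp: F_def Suc nth_cfactor)
    then obtain j a where letter: "j < m" "F ! j = Some a"
      using ucycle_letter_before_last[of m u p y] uc diamond Suc by (auto simp: F_def)
    obtain v :: "nat \<Rightarrow> real" where inj_v: "inj_on v {..<n}"
      and v_prefix: "compatible (take m F) v" and v_F: "\<not> compatible F v"
      using exists_incompatible_last[OF _ len_F F_last letter] ucycle_distinct_letters[OF uc]
      unfolding Suc F_def by blast
    obtain i where "covers (?W i) (ranks v n)"
      using ucycle_covers_exists[OF uc ranks_in_nperms[OF inj_v]] by blast
    then have comp_i: "compatible (?W i) v"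
      using covers_ranks_iff[OF length_cfactor inj_v] by blast
    then have "i mod length u = Suc p mod length u"
      using ucycle_window_after_diamond[of m u p v i] uc diamond inj_v v_prefix Suc
      by (simp add: F_def)
    then have "?W i = F"
      using cfactor_mod[of u i n] cfactor_mod[of u "Suc p" n] by (simp add: F_def)
    then show False
      using comp_i v_F by simp
  qed
qed (use diamond in simp)

subsection \<open>Periodicity of the diamonds\<close>

lemma ucycle_diamond_shift_iff:
  assumes uc: "ucycle n u"
  shows "u ! ((p + n) mod length u) = None \<longleftrightarrow> u ! (p mod length u) = None"
proof
  define N where "N = length u"
  define s where "s q = (q + n) mod N" for q
  let ?D = "{q. q < N \<and> u ! q = None}"
  have N: "0 < N" using ucycle_length_pos[OF uc] by (simp add: N_def)
  have inj: "inj_on s {..<N}"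
  proof (rule inj_onI)
    fix q q' assume "q \<in> {..<N}" "q' \<in> {..<N}" "s q = s q'"
    then have "[q + n = q' + n] (mod N)" by (simp add: s_def cong_def)
    then have "[q = q'] (mod N)" by (simp only: cong_add_rcancel_nat)
    then show "q = q'" using \<open>q \<in> {..<N}\<close> \<open>q' \<in> {..<N}\<close> by (simp add: cong_def)
  qed
  have "s ` ?D \<subseteq> ?D"
    using ucycle_diamond_shift[OF uc] N by (auto simp: s_def N_def)
  moreover have "inj_on s ?D"
    using inj by (rule inj_on_subset) auto
  ultimately have D: "s ` ?D = ?D"
    by (intro endo_inj_surj) simp_all
  assume "u ! ((p + n) mod length u) = None"
  then have "s (p mod N) \<in> s ` ?D"
    using N D by (simp add: s_def N_def mod_add_left_eq)
  then obtain q where "s (p mod N) = s q" "q \<in> ?D"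
    by (rule imageE)
  moreover have "p mod N < N" using N by simp
  ultimately have "q = p mod N"
    using inj_onD[OF inj] by auto
  with \<open>q \<in> ?D\<close> show "u ! (p mod length u) = None"
    by (simp add: N_def)
qed (rule ucycle_diamond_shift[OF assms])

lemma periodic_add_mult:
  fixes f :: "nat \<Rightarrow> 'a" and c m :: nat
  assumes "\<And>p. f (p + c) = f p"
  shows "f (p + c * m) = f p"
proof (induction m)
  case (Suc m)
  have "f (p + c * Suc m) = f ((p + c * m) + c)" by (simp add: algebra_simps)
  with Suc assms show ?case by simp
qed simp

lemma periodic_gcd:
  fixes f :: "nat \<Rightarrow> 'a" and a b :: nat
  assumes a: "\<And>p. f (p + a) = f p" and b: "\<And>p. f (p + b) = f p"
  shows "f (p + gcd a b) = f p"
proof (cases "a = 0")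
  case True
  then show ?thesis using b by simp
next
  case False
  then obtain x y where xy: "a * x = b * y + gcd a b"
    using bezout_nat by blast
  have "f p = f (p + a * x)" using periodic_add_mult[where f = f and c = a, OF a] by simp
  also have "\<dots> = f ((p + gcd a b) + b * y)" using xy by (simp add: algebra_simps)
  also have "\<dots> = f (p + gcd a b)" by (rule periodic_add_mult[where f = f and c = b, OF b])
  finally show ?thesis by simp
qed

lemma sum_periodic_shift:
  fixes f :: "nat \<Rightarrow> 'a::cancel_comm_monoid_add"
  assumes "\<And>p. f (p + n) = f p"
  shows "(\<Sum>j<n. f (i + j)) = (\<Sum>j<n. f j)"
proof (induction i)
  case (Suc i)
  have "f (i + 0) + (\<Sum>j<n. f (i + Suc j)) = (\<Sum>j<Suc n. f (i + j))"
    by (rule sum.lessThan_Suc_shift[symmetric])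
  also have "\<dots> = (\<Sum>j<n. f (i + j)) + f (i + 0)"
    using assms[of i] by simp
  finally have "(\<Sum>j<n. f (Suc i + j)) = (\<Sum>j<n. f (i + j))"
    by (simp add: add.commute)
  then show ?case using Suc by simp
qed simp

lemma sum_lessThan_add:
  fixes f :: "nat \<Rightarrow> 'a::comm_monoid_add" and a b :: nat
  shows "(\<Sum>j<a + b. f j) = (\<Sum>j<a. f j) + (\<Sum>j<b. f (a + j))"
  by (induction b) (simp_all add: add.assoc)

lemma sum_periodic_blocks:
  fixes f :: "nat \<Rightarrow> nat"
  assumes "\<And>p. f (p + c) = f p"
  shows "(\<Sum>j<c * m. f j) = m * (\<Sum>j<c. f j)"
proof (induction m)
  case (Suc m)
  have "(\<Sum>j<c * Suc m. f j) = (\<Sum>j<c * m. f j) + (\<Sum>j<c. f (c * m + j))"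
    using sum_lessThan_add[of f "c * m" c] by (simp add: add.commute)
  also have "(\<Sum>j<c. f (c * m + j)) = (\<Sum>j<c. f j)"
    using periodic_add_mult[where f = f and c = c, OF assms] by (simp add: add.commute)
  finally show ?case using Suc by simp
qed simp

lemma card_nperms: "card (nperms n) = fact n"
proof -
  have "distinct_letters (replicate n None)"
    by (simp add: distinct_letters_def)
  moreover have "count_list (replicate n (None :: letter)) None = n"
    by (induction n) simp_all
  ultimately have "card {\<pi>. covers (replicate n None) \<pi>} = fact n"
    using card_covers[of "replicate n None"] by simp
  moreover have "{\<pi>. covers (replicate n None) \<pi>} = nperms n"
    by (simp add: covers_iff_compatible compatible_replicate_None)
  ultimately show ?thesis
    by simp
qed

lemma count_list_cfactor_None:
  "count_list (cfactor u i n) None = (\<Sum>j<n. if u ! ((i + j) mod length u) = None then 1 else 0)"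
  unfolding cfactor_def by (induction n) simp_all

lemma ucycle_count_diamonds:
  assumes "ucycle n u"
  shows "count_list (cfactor u i n) None = diamondicity n u"
proof -
  define d where "d p = (if u ! (p mod length u) = None then 1 else 0 :: nat)" for p
  have "d (p + n) = d p" for p
    using ucycle_diamond_shift_iff[OF assms] by (simp add: d_def)
  then have "(\<Sum>j<n. d (i + j)) = (\<Sum>j<n. d j)"
    by (rule sum_periodic_shift)
  then show ?thesis
    by (simp add: diamondicity_def count_list_cfactor_None d_def)
qed

lemma ucycle_length_fact:
  assumes uc: "ucycle n u"
  shows "length u = fact (n - diamondicity n u)"
proof -
  define N where "N = length u"
  define k where "k = n - diamondicity n u"
  define C where "C i = {\<pi>. covers (cfactor u i n) \<pi>}" for i
  have card_C: "card (C i) * fact k = fact n" for i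
    using card_covers[OF ucycle_distinct_letters[OF uc]] ucycle_count_diamonds[OF uc]
    by (simp add: C_def k_def)
  have "nperms n = (\<Union>i<N. C i)"
  proof (intro equalityI subsetI)
    fix \<pi> assume "\<pi> \<in> nperms n"
    then show "\<pi> \<in> (\<Union>i<N. C i)"
      using ucycle_covers_exists[OF uc] by (auto simp: C_def N_def)
  next
    fix \<pi> assume "\<pi> \<in> (\<Union>i<N. C i)"
    then show "\<pi> \<in> nperms n"
      using covers_imp_nperms[of "cfactor u _ n" \<pi>] by (auto simp: C_def)
  qed
  moreover have "C i \<inter> C j = {}" if "i < N" "j < N" "i \<noteq> j" for i j
  proof -
    have "i mod N \<noteq> j mod N" using that by simp
    then show ?thesis
      using ucycle_covers_unique[OF uc, of i _ j] by (auto simp: C_def N_def)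
  qed
  ultimately have "fact n = (\<Sum>i<N. card (C i))"
    using card_nperms[of n] by (simp add: card_UN_disjoint C_def finite_covers)
  then have "fact n * fact k = N * fact n"
    using card_C by (simp add: sum_distrib_right)
  then show ?thesis
    by (simp add: N_def k_def)
qed

lemma ucycle_diamond_period_gcd:
  assumes "ucycle n u"
  shows "u ! (i mod length u) = None \<longleftrightarrow> u ! ((i + gcd n (length u)) mod length u) = None"
  using periodic_gcd[where f = "\<lambda>p. u ! (p mod length u) = None" and a = n and b = "length u"]
    ucycle_diamond_shift_iff[OF assms] by simp

lemma ucycle_diamondicity_dvd:
  assumes "ucycle n u"
  shows "n div gcd n (length u) dvd diamondicity n u"
proof -
  define c where "c = gcd n (length u)"
  define d where "d p = (if u ! (p mod length u) = None then 1 else 0 :: nat)" for p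
  have "d (p + c) = d p" for p
    using ucycle_diamond_period_gcd[OF assms, of p] by (simp add: d_def c_def)
  then have "(\<Sum>j<c * (n div c). d j) = (n div c) * (\<Sum>j<c. d j)"
    by (rule sum_periodic_blocks)
  moreover have "c * (n div c) = n" by (simp add: c_def)
  ultimately have "diamondicity n u = (n div c) * (\<Sum>j<c. d j)"
    by (simp add: diamondicity_def count_list_cfactor_None d_def)
  then show ?thesis by (simp add: c_def)
qed

theorem corollary1:
  fixes n k :: nat and u :: "nat option list"
  assumes "ucycle n u"
    and "k \<le> n"
    and "diamondicity n u = n - k"
  shows "length u = fact k \<and>
         (\<forall>i. u ! (i mod length u) = None \<longleftrightarrow>
              u ! ((i + gcd n (length u)) mod length u) = None) \<and>
         (n div gcd n (length u)) dvd (n - k) \<and>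
         (1 \<le> k \<and> k \<le> n - 1 \<longrightarrow> gcd n (length u) \<noteq> 1)"
proof -
  have length: "length u = fact k"
    using ucycle_length_fact[OF assms(1)] assms(2,3) by simp
  have dvd: "n div gcd n (length u) dvd n - k"
    using ucycle_diamondicity_dvd[OF assms(1)] assms(3) by simp
  have "gcd n (length u) \<noteq> 1" if "1 \<le> k" "k \<le> n - 1"
  proof
    assume "gcd n (length u) = 1"
    then have "n dvd n - k" using dvd by simp
    moreover have "0 < n - k" "n - k < n" using that by auto
    ultimately show False by (simp add: nat_dvd_not_less)
  qed
  then show ?thesis
    using length dvd ucycle_diamond_period_gcd[OF assms(1)] by simp
qed

end
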